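(* Let $K$ be a skew field with center $P$ and an involution, $\mathcal C$ a linear category over $P$ with involution, $A$ and $B$ selfadjoint representations of $\mathcal C$ over $K$, and $f=f^\circ\in\operatorname{Aut}(A)$, $g=g^\circ\in\operatorname{Aut}(B)$. Then $A^f$ is congruent to $B^g$ if and only if $g=h^\circ fh$ for some isomorphism $h:B\to A$.
   Context: $K$ has an involution $a\mapsto\bar a$. A linear category over $P$ has $P$-vector-space Hom sets and bilinear composition; an involution on it: $u\mapsto u^*$, $(\alpha:u\to v)\mapsto(\alpha^*:v^*\to u^* )$, $u^{**}=u\ne u^*$, $\alpha^{**}=\alpha$, $(\alpha\beta)^*=\beta^*\alpha^*$, $(\alpha a)^*=\alpha^*\bar a$. Representations: functors to finite-dimensional right $K$-spaces, finite total dimension, preserving $P$-linear combinations; morphisms: natural transformations. $V^*$: semilinear forms ($\varphi(xa)=\bar a\varphi(x)$), $A^*\varphi=\varphi A$, $V^{**}=V$. $A^\circ_u=(A_{u^*})^*$, $A^\circ_\alpha=(A_{\alpha^*})^*$, $f^\circ_u=(f_{u^*})^*$. Selfadjoint: $A=A^\circ$; congruence: isomorphism $\varphi$ of selfadjoint representations with $\varphi^\circ=\varphi^{-1}$. Fix a partition of the objects into $S_0$ and $S_0^*$. For selfadjoint $A$ and automorphism $f=f^\circ$ of $A$: $\tilde f_v=f_v$, $\tilde f_{v^*}=1$ for $v\in S_0$, and $A^f$ is the selfadjoint representation with $A^f_v=A_v$ for all objects $v$ and $A^f_\alpha=\tilde f_v^{-1}A_\alpha\tilde f_u$ for $\alpha:u\to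 v$. *)

theory Defs
  imports "Jordan_Normal_Form.Matrix"
begin

text \<open>The skew field K is a type of class division_ring. An involution is an
additive anti-multiplicative map of order 2 (bar 1 = 1 follows).\<close>

definition skew_involution :: "('k::division_ring \<Rightarrow> 'k) \<Rightarrow> bool" where
  "skew_involution bar \<longleftrightarrow>
     (\<forall>a b. bar (a + b) = bar a + bar b \<and> bar (a * b) = bar b * bar a \<and> bar (bar a) = a)"

definition center :: "'k::ring set" where
  "center = {a. \<forall>b. a * b = b * a}"

text \<open>All morphisms live in one type 'm; each morphism has a domain and codomain,
so Hom(u,v) = {a. dom a = u and cod a = v}. lc_comp C b a is the composite b a
(first a, then b).\<close>

record ('o, 'm, 'k) lincat =
  lc_dom   :: "'m \<Rightarrow> 'o"
  lc_cod   :: "'m \<Rightarrow> 'o"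
  lc_comp  :: "'m \<Rightarrow> 'm \<Rightarrow> 'm"
  lc_id    :: "'o \<Rightarrow> 'm"
  lc_add   :: "'m \<Rightarrow> 'm \<Rightarrow> 'm"
  lc_scal  :: "'m \<Rightarrow> 'k \<Rightarrow> 'm"
  lc_zero  :: "'o \<Rightarrow> 'o \<Rightarrow> 'm"
  lc_ostar :: "'o \<Rightarrow> 'o"
  lc_mstar :: "'m \<Rightarrow> 'm"

definition hom :: "('o, 'm, 'k) lincat \<Rightarrow> 'o \<Rightarrow> 'o \<Rightarrow> 'm set" where
  "hom C u v = {a. lc_dom C a = u \<and> lc_cod C a = v}"

definition lin_cat_inv :: "('o, 'm, 'k::division_ring) lincat \<Rightarrow> ('k \<Rightarrow> 'k) \<Rightarrow> bool" where
  "lin_cat_inv C bar \<longleftrightarrow>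
    \<comment> \<open>category\<close>
    (\<forall>u. lc_id C u \<in> hom C u u) \<and>
    (\<forall>a b. lc_dom C b = lc_cod C a \<longrightarrow> lc_comp C b a \<in> hom C (lc_dom C a) (lc_cod C b)) \<and>
    (\<forall>a b c. lc_dom C b = lc_cod C a \<longrightarrow> lc_dom C c = lc_cod C b \<longrightarrow>
        lc_comp C c (lc_comp C b a) = lc_comp C (lc_comp C c b) a) \<and>
    (\<forall>a. lc_comp C (lc_id C (lc_cod C a)) a = a \<and> lc_comp C a (lc_id C (lc_dom C a)) = a) \<and>
    \<comment> \<open>each Hom(u,v) is a vector space over P (right scalar action)\<close>
    (\<forall>u v. lc_zero C u v \<in> hom C u v) \<and>
    (\<forall>u v. \<forall>a\<in>hom C u v. \<forall>b\<in>hom C u v. lc_add C a b \<in> hom C u v) \<and>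
    (\<forall>u v. \<forall>a\<in>hom C u v. \<forall>p\<in>center. lc_scal C a p \<in> hom C u v) \<and>
    (\<forall>u v. \<forall>a\<in>hom C u v. \<forall>b\<in>hom C u v. \<forall>c\<in>hom C u v.
        lc_add C (lc_add C a b) c = lc_add C a (lc_add C b c) \<and> lc_add C a b = lc_add C b a) \<and>
    (\<forall>u v. \<forall>a\<in>hom C u v. lc_add C a (lc_zero C u v) = a \<and>
        (\<exists>b\<in>hom C u v. lc_add C a b = lc_zero C u v)) \<and>
    (\<forall>u v. \<forall>a\<in>hom C u v. \<forall>b\<in>hom C u v. \<forall>p\<in>center. \<forall>q\<in>center.
        lc_scal C a (p * q) = lc_scal C (lc_scal C a p) q \<and>
        lc_scal C a 1 = a \<and>
        lc_scal C (lc_add C a b) p = lc_add C (lc_scal C a p) (lc_scal C b p) \<and>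
        lc_scal C a (p + q) = lc_add C (lc_scal C a p) (lc_scal C a q)) \<and>
    \<comment> \<open>composition is bilinear\<close>
    (\<forall>u v w. \<forall>a\<in>hom C u v. \<forall>a'\<in>hom C u v. \<forall>b\<in>hom C v w. \<forall>b'\<in>hom C v w. \<forall>p\<in>center.
        lc_comp C (lc_add C b b') a = lc_add C (lc_comp C b a) (lc_comp C b' a) \<and>
        lc_comp C b (lc_add C a a') = lc_add C (lc_comp C b a) (lc_comp C b a') \<and>
        lc_comp C (lc_scal C b p) a = lc_scal C (lc_comp C b a) p \<and>
        lc_comp C b (lc_scal C a p) = lc_scal C (lc_comp C b a) p) \<and>
    \<comment> \<open>involution\<close>
    (\<forall>u. lc_ostar C (lc_ostar C u) = u \<and> lc_ostar C u \<noteq> u) \<and>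
    (\<forall>a. lc_mstar C a \<in> hom C (lc_ostar C (lc_cod C a)) (lc_ostar C (lc_dom C a)) \<and>
         lc_mstar C (lc_mstar C a) = a) \<and>
    (\<forall>a b. lc_dom C a = lc_cod C b \<longrightarrow>
         lc_mstar C (lc_comp C a b) = lc_comp C (lc_mstar C b) (lc_mstar C a)) \<and>
    (\<forall>a. \<forall>p\<in>center. lc_mstar C (lc_scal C a p) = lc_scal C (lc_mstar C a) (bar p))"

text \<open>A finite-dimensional right K-space is represented as K^n (column vectors),
a linear map K^m \<rightarrow> K^n as an n\<times>m matrix. A representation is a pair (d, R):
d u = dimension of the space at u, R a = matrix of the map at a.\<close>

type_synonym ('o, 'm, 'k) rep = "('o \<Rightarrow> nat) \<times> ('m \<Rightarrow> 'k mat)"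

definition mat_rscal :: "'k::ring mat \<Rightarrow> 'k \<Rightarrow> 'k mat" where
  "mat_rscal M a = map_mat (\<lambda>x. x * a) M"

definition is_rep :: "('o, 'm, 'k::division_ring) lincat \<Rightarrow> ('o, 'm, 'k) rep \<Rightarrow> bool" where
  "is_rep C A \<longleftrightarrow>
    finite {u. fst A u \<noteq> 0} \<and>
    (\<forall>a. snd A a \<in> carrier_mat (fst A (lc_cod C a)) (fst A (lc_dom C a))) \<and>
    (\<forall>u. snd A (lc_id C u) = 1\<^sub>m (fst A u)) \<and>
    (\<forall>a b. lc_dom C b = lc_cod C a \<longrightarrow> snd A (lc_comp C b a) = snd A b * snd A a) \<and>
    (\<forall>u v. \<forall>a\<in>hom C u v. \<forall>b\<in>hom C u v. \<forall>p\<in>center. \<forall>q\<in>center.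
       snd A (lc_add C (lc_scal C a p) (lc_scal C b q)) =
         mat_rscal (snd A a) p + mat_rscal (snd A b) q)"

definition rep_hom :: "('o, 'm, 'k::division_ring) lincat \<Rightarrow> ('o, 'm, 'k) rep \<Rightarrow> ('o, 'm, 'k) rep
    \<Rightarrow> ('o \<Rightarrow> 'k mat) \<Rightarrow> bool" where
  "rep_hom C A B F \<longleftrightarrow>
    (\<forall>u. F u \<in> carrier_mat (fst B u) (fst A u)) \<and>
    (\<forall>a. F (lc_cod C a) * snd A a = snd B a * F (lc_dom C a))"

definition rep_iso :: "('o, 'm, 'k::division_ring) lincat \<Rightarrow> ('o, 'm, 'k) rep \<Rightarrow> ('o, 'm, 'k) rep
    \<Rightarrow> ('o \<Rightarrow> 'k mat) \<Rightarrow> bool" where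
  "rep_iso C A B F \<longleftrightarrow> rep_hom C A B F \<and>
    (\<forall>u. \<exists>G \<in> carrier_mat (fst A u) (fst B u). G * F u = 1\<^sub>m (fst A u) \<and> F u * G = 1\<^sub>m (fst B u))"

definition minv :: "'k::ring_1 mat \<Rightarrow> 'k mat" where
  "minv M = (THE G. G * M = 1\<^sub>m (dim_col M) \<and> M * G = 1\<^sub>m (dim_row M))"

text \<open>Identifying the space of semilinear forms on K^n with K^n via
y \<mapsto> (x \<mapsto> \<Sum>i. bar(x_i) y_i), the dual map A^* of a matrix A is its
conjugate transpose with respect to bar, and V^{**} = V canonically.\<close>

definition adjm :: "('k \<Rightarrow> 'k) \<Rightarrow> 'k mat \<Rightarrow> 'k mat" where
  "adjm bar M = mat (dim_col M) (dim_row M) (\<lambda>(i, j). bar (M $$ (j, i)))"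

definition dual_rep :: "('o, 'm, 'k) lincat \<Rightarrow> ('k \<Rightarrow> 'k) \<Rightarrow> ('o, 'm, 'k) rep \<Rightarrow> ('o, 'm, 'k) rep" where
  "dual_rep C bar A = ((\<lambda>u. fst A (lc_ostar C u)), (\<lambda>a. adjm bar (snd A (lc_mstar C a))))"

definition dual_map :: "('o, 'm, 'k) lincat \<Rightarrow> ('k \<Rightarrow> 'k) \<Rightarrow> ('o \<Rightarrow> 'k mat) \<Rightarrow> ('o \<Rightarrow> 'k mat)" where
  "dual_map C bar F = (\<lambda>u. adjm bar (F (lc_ostar C u)))"

definition selfadjoint :: "('o, 'm, 'k::division_ring) lincat \<Rightarrow> ('k \<Rightarrow> 'k) \<Rightarrow> ('o, 'm, 'k) rep \<Rightarrow> bool" where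
  "selfadjoint C bar A \<longleftrightarrow> is_rep C A \<and> A = dual_rep C bar A"

definition congruent :: "('o, 'm, 'k::division_ring) lincat \<Rightarrow> ('k \<Rightarrow> 'k) \<Rightarrow> ('o, 'm, 'k) rep
    \<Rightarrow> ('o, 'm, 'k) rep \<Rightarrow> bool" where
  "congruent C bar A B \<longleftrightarrow> selfadjoint C bar A \<and> selfadjoint C bar B \<and>
     (\<exists>\<phi>. rep_iso C A B \<phi> \<and> (\<forall>u. dual_map C bar \<phi> u = minv (\<phi> u)))"

definition obj_partition :: "('o, 'm, 'k) lincat \<Rightarrow> 'o set \<Rightarrow> bool" where
  "obj_partition C S0 \<longleftrightarrow> S0 \<inter> lc_ostar C ` S0 = {} \<and> S0 \<union> lc_ostar C ` S0 = UNIV"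

definition ftilde :: "'o set \<Rightarrow> ('o, 'm, 'k::ring_1) rep \<Rightarrow> ('o \<Rightarrow> 'k mat) \<Rightarrow> 'o \<Rightarrow> 'k mat" where
  "ftilde S0 A f v = (if v \<in> S0 then f v else 1\<^sub>m (fst A v))"

definition twist :: "('o, 'm, 'k::ring_1) lincat \<Rightarrow> 'o set \<Rightarrow> ('o, 'm, 'k) rep \<Rightarrow> ('o \<Rightarrow> 'k mat)
    \<Rightarrow> ('o, 'm, 'k) rep" where
  "twist C S0 A f = (fst A,
     (\<lambda>a. minv (ftilde S0 A f (lc_cod C a)) * snd A a * ftilde S0 A f (lc_dom C a)))"

end

theory Submission
  imports Defs
begin

text \<open>Write \<open>F = ftilde S0 A f\<close>. By definition \<open>A\<^sup>f\<close> is the conjugate \<open>F\<^sup>-\<^sup>1 A F\<close>, so \<open>F\<close> is an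
  isomorphism \<open>A\<^sup>f \<rightarrow> A\<close>, and \<open>f = F F\<^sup>\<circ>\<close>: on \<open>S0\<close> the first factor is \<open>f\<close>, on \<open>S0\<^sup>*\<close> the
  second is \<open>f\<^sup>\<circ> = f\<close>. As \<open>f\<close> commutes with \<open>A\<close>, conjugating by \<open>F\<close> or by \<open>(F\<^sup>\<circ>)\<^sup>-\<^sup>1\<close> gives
  the same representation, which makes \<open>A\<^sup>f\<close> selfadjoint and \<open>F\<^sup>\<circ>\<close> an isomorphism \<open>A \<rightarrow> A\<^sup>f\<close>.
  A congruence \<open>\<phi> : A\<^sup>f \<rightarrow> B\<^sup>g\<close> then yields \<open>h = (F\<^sub>A\<^sup>\<circ>)\<^sup>-\<^sup>1 \<phi>\<^sup>-\<^sup>1 F\<^sub>B\<^sup>\<circ> : B \<rightarrow> A\<close>, and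
  \<open>h\<^sup>\<circ> f h = F\<^sub>B \<phi> F\<^sub>A\<^sup>-\<^sup>1 \<cdot> F\<^sub>A F\<^sub>A\<^sup>\<circ> \<cdot> (F\<^sub>A\<^sup>\<circ>)\<^sup>-\<^sup>1 \<phi>\<^sup>-\<^sup>1 F\<^sub>B\<^sup>\<circ> = F\<^sub>B F\<^sub>B\<^sup>\<circ> = g\<close>; conversely, if
  \<open>g = h\<^sup>\<circ> f h\<close>, then \<open>\<phi> = F\<^sub>B\<^sup>-\<^sup>1 h\<^sup>\<circ> F\<^sub>A\<close> is a congruence \<open>A\<^sup>f \<rightarrow> B\<^sup>g\<close>.\<close>

section \<open>Invertible matrices\<close>

text \<open>Rectangular, since isomorphic representations are not known a priori to have equal dimensions.\<close>

definition iso_mat :: "nat \<Rightarrow> nat \<Rightarrow> 'k::ring_1 mat \<Rightarrow> bool" where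
  "iso_mat n m M \<longleftrightarrow> M \<in> carrier_mat n m \<and> (\<exists>G\<in>carrier_mat m n. G * M = 1\<^sub>m m \<and> M * G = 1\<^sub>m n)"

lemma mult_assoc_dim:
  "dim_col A = dim_row B \<Longrightarrow> dim_col B = dim_row C \<Longrightarrow> A * B * C = A * (B * (C :: 'a::semiring_0 mat))"
  by (rule assoc_mult_mat[of A _ "dim_row B" _ "dim_row C"]) auto

lemma mult_cancel_left_dim:
  fixes A B C :: "'a::semiring_1 mat"
  assumes AB: "A * B = 1\<^sub>m (dim_row C)" and "dim_col A = dim_row B"
  shows "A * (B * C) = C"
proof -
  have "dim_col B = dim_row C" using AB by (metis index_mult_mat(3) index_one_mat(3))
  then have "A * (B * C) = (A * B) * C" using mult_assoc_dim assms(2) by metis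
  also have "\<dots> = C" using AB by simp
  finally show ?thesis .
qed

lemmas mult_dim_simps = mult_assoc_dim mult_cancel_left_dim

lemma minv_eqI:
  fixes M :: "'k::ring_1 mat"
  assumes M: "M \<in> carrier_mat n m" and G: "G \<in> carrier_mat m n"
    and "G * M = 1\<^sub>m m" and "M * G = 1\<^sub>m n"
  shows "minv M = G"
  unfolding minv_def
proof (rule the_equality)
  show "G * M = 1\<^sub>m (dim_col M) \<and> M * G = 1\<^sub>m (dim_row M)" using assms by auto
next
  fix G' assume G': "G' * M = 1\<^sub>m (dim_col M) \<and> M * G' = 1\<^sub>m (dim_row M)"
  then have "G' \<in> carrier_mat m n"
    using M by (metis carrier_matD carrier_matI index_mult_mat(2,3) index_one_mat(2,3))
  then have "G' = (G' * M) * G" using assms by (simp add: mult_assoc_dim)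
  with G' M G show "G' = G" by simp
qed

lemma
  fixes M :: "'k::ring_1 mat"
  assumes "iso_mat n m M"
  shows iso_mat_carrier: "M \<in> carrier_mat n m"
    and minv_carrier: "minv M \<in> carrier_mat m n"
    and minv_mult_self: "minv M * M = 1\<^sub>m m"
    and mult_minv_self: "M * minv M = 1\<^sub>m n"
    and iso_mat_minv: "iso_mat m n (minv M)"
    and minv_minv: "minv (minv M) = M"
proof -
  obtain G where G: "G \<in> carrier_mat m n" "G * M = 1\<^sub>m m" "M * G = 1\<^sub>m n"
    and M: "M \<in> carrier_mat n m"
    using assms unfolding iso_mat_def by blast
  have "minv M = G" using M G by (rule minv_eqI)
  then show "M \<in> carrier_mat n m" "minv M \<in> carrier_mat m n" "minv M * M = 1\<^sub>m m"
    "M * minv M = 1\<^sub>m n" "iso_mat m n (minv M)" "minv (minv M) = M"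
    using G M unfolding iso_mat_def by (auto intro: minv_eqI)
qed

lemma iso_mat_dims:
  assumes "iso_mat n m M"
  shows "dim_row M = n" "dim_col M = m" "dim_row (minv M) = m" "dim_col (minv M) = n"
  using iso_mat_carrier[OF assms] minv_carrier[OF assms] by auto

lemma iso_mat_one: "iso_mat n n (1\<^sub>m n :: 'k::ring_1 mat)"
  unfolding iso_mat_def by auto

lemma
  fixes M N :: "'k::ring_1 mat"
  assumes M: "iso_mat n m M" and N: "iso_mat m k N"
  shows iso_mat_mult: "iso_mat n k (M * N)"
    and minv_mult: "minv (M * N) = minv N * minv M"
proof -
  note d = iso_mat_dims[OF M] iso_mat_dims[OF N]
  have l: "(minv N * minv M) * (M * N) = 1\<^sub>m k" and r: "(M * N) * (minv N * minv M) = 1\<^sub>m n"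
    using d minv_mult_self[OF M] minv_mult_self[OF N] mult_minv_self[OF M] mult_minv_self[OF N]
    by (simp_all add: mult_dim_simps)
  have "M * N \<in> carrier_mat n k" "minv N * minv M \<in> carrier_mat k n" using d by auto
  with l r show "iso_mat n k (M * N)" "minv (M * N) = minv N * minv M"
    unfolding iso_mat_def by (auto intro: minv_eqI)
qed

lemma mult_mat_rscal: "dim_col M = dim_row N \<Longrightarrow> M * mat_rscal N p = mat_rscal (M * N) (p::'k::ring)"
  by (rule eq_matI) (auto simp: mat_rscal_def scalar_prod_def sum_distrib_right mult.assoc)

lemma mat_rscal_mult:
  "p \<in> center \<Longrightarrow> dim_col M = dim_row N \<Longrightarrow> mat_rscal M p * N = mat_rscal (M * N) (p::'k::ring)"
  by (rule eq_matI) (auto simp: mat_rscal_def scalar_prod_def sum_distrib_right mult.assoc center_def)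

lemma minv_commute:
  fixes F G X Y :: "'k::ring_1 mat"
  assumes F: "iso_mat n' n F" and G: "iso_mat m' m G"
    and X: "X \<in> carrier_mat n m" and Y: "Y \<in> carrier_mat n' m'"
    and FX: "F * X = Y * G"
  shows "minv F * Y = X * minv G"
proof -
  note d = iso_mat_dims[OF F] iso_mat_dims[OF G] carrier_matD[OF X] carrier_matD[OF Y]
  have "minv F * Y = minv F * ((Y * G) * minv G)"
    using d mult_minv_self[OF G] by (simp add: mult_dim_simps)
  also have "\<dots> = minv F * (F * (X * minv G))" unfolding FX[symmetric] using d by (simp add: mult_dim_simps)
  also have "\<dots> = X * minv G" using d minv_mult_self[OF F] by (simp add: mult_dim_simps)
  finally show ?thesis .
qed

section \<open>Conjugate transposes\<close>

lemma
  assumes "skew_involution bar"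
  shows bar_add: "bar (a + b) = bar a + bar b"
    and bar_mult: "bar (a * b) = bar b * bar a"
    and bar_bar: "bar (bar a) = a"
    and bar_zero: "bar 0 = 0"
    and bar_one: "bar 1 = 1"
proof -
  have h: "\<And>a b. bar (a + b) = bar a + bar b \<and> bar (a * b) = bar b * bar a \<and> bar (bar a) = a"
    using assms unfolding skew_involution_def by blast
  then show "bar (a + b) = bar a + bar b" "bar (a * b) = bar b * bar a" "bar (bar a) = a" by auto
  have "bar 0 = bar 0 + bar 0" using h[of 0 0] by simp
  then show "bar 0 = 0" by simp
  have "bar (bar 1 * 1) = bar 1 * bar (bar 1)" using h by blast
  then show "bar 1 = 1" using h by simp
qed

lemma bar_sum: "skew_involution bar \<Longrightarrow> bar (sum f A) = (\<Sum>x\<in>A. bar (f x))"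
  by (induction A rule: infinite_finite_induct) (simp_all add: bar_zero bar_add)

lemma adjm_dims [simp]: "dim_row (adjm bar M) = dim_col M" "dim_col (adjm bar M) = dim_row M"
  and adjm_index [simp]: "i < dim_col M \<Longrightarrow> j < dim_row M \<Longrightarrow> adjm bar M $$ (i, j) = bar (M $$ (j, i))"
  unfolding adjm_def by auto

lemma adjm_adjm: "skew_involution bar \<Longrightarrow> adjm bar (adjm bar M) = M"
  by (rule eq_matI) (auto simp: bar_bar)

lemma adjm_one: "skew_involution bar \<Longrightarrow> adjm bar (1\<^sub>m n) = 1\<^sub>m n"
  by (rule eq_matI) (auto simp: bar_zero bar_one)

lemma adjm_mult:
  fixes M N :: "'k::division_ring mat"
  assumes bar: "skew_involution bar" and MN: "dim_col M = dim_row N"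
  shows "adjm bar (M * N) = adjm bar N * adjm bar M"
proof (rule eq_matI)
  fix i j assume i: "i < dim_row (adjm bar N * adjm bar M)" and j: "j < dim_col (adjm bar N * adjm bar M)"
  have "adjm bar (M * N) $$ (i, j) = (\<Sum>k<dim_row N. bar (N $$ (k, i)) * bar (M $$ (j, k)))"
    using i j MN by (simp add: scalar_prod_def bar_sum[OF bar] bar_mult[OF bar] atLeast0LessThan)
  also have "\<dots> = (adjm bar N * adjm bar M) $$ (i, j)"
    using i j MN by (simp add: scalar_prod_def atLeast0LessThan)
  finally show "adjm bar (M * N) $$ (i, j) = (adjm bar N * adjm bar M) $$ (i, j)" .
qed auto

lemma adjm_mult3:
  fixes X Y Z :: "'k::division_ring mat"
  assumes "skew_involution bar" "dim_col X = dim_row Y" "dim_col Y = dim_row Z"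
  shows "adjm bar (X * Y * Z) = adjm bar Z * adjm bar Y * adjm bar X"
  using assms by (simp add: adjm_mult mult_assoc_dim)

lemma
  fixes M :: "'k::division_ring mat"
  assumes bar: "skew_involution bar" and M: "iso_mat n m M"
  shows iso_mat_adjm: "iso_mat m n (adjm bar M)"
    and minv_adjm: "minv (adjm bar M) = adjm bar (minv M)"
proof -
  note d = iso_mat_dims[OF M]
  have l: "adjm bar (minv M) * adjm bar M = 1\<^sub>m n" and r: "adjm bar M * adjm bar (minv M) = 1\<^sub>m m"
    using d adjm_mult[OF bar] adjm_one[OF bar] mult_minv_self[OF M] minv_mult_self[OF M] by metis+
  have "adjm bar M \<in> carrier_mat m n" "adjm bar (minv M) \<in> carrier_mat n m" using d by auto
  with l r show "iso_mat m n (adjm bar M)" "minv (adjm bar M) = adjm bar (minv M)"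
    unfolding iso_mat_def by (auto intro: minv_eqI)
qed

section \<open>Representations and their isomorphisms\<close>

lemma
  assumes C: "lin_cat_inv C bar"
  shows dom_mstar: "lc_dom C (lc_mstar C a) = lc_ostar C (lc_cod C a)"
    and cod_mstar: "lc_cod C (lc_mstar C a) = lc_ostar C (lc_dom C a)"
    and ostar_ostar: "lc_ostar C (lc_ostar C u) = u"
    and dom_id: "lc_dom C (lc_id C u) = u"
    and cod_id: "lc_cod C (lc_id C u) = u"
    and dom_comp: "lc_dom C b = lc_cod C a \<Longrightarrow> lc_dom C (lc_comp C b a) = lc_dom C a"
    and cod_comp: "lc_dom C b = lc_cod C a \<Longrightarrow> lc_cod C (lc_comp C b a) = lc_cod C b"
    and lin_comb_hom: "x \<in> hom C u v \<Longrightarrow> y \<in> hom C u v \<Longrightarrow> p \<in> center \<Longrightarrow> q \<in> center \<Longrightarrow>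
      lc_add C (lc_scal C x p) (lc_scal C y q) \<in> hom C u v"
proof -
  note L = C[unfolded lin_cat_inv_def]
  have "\<forall>u. lc_id C u \<in> hom C u u" using L by (elim conjE) assumption
  moreover have "\<forall>a b. lc_dom C b = lc_cod C a \<longrightarrow> lc_comp C b a \<in> hom C (lc_dom C a) (lc_cod C b)"
    using L by (elim conjE) assumption
  moreover have "\<forall>u v. \<forall>a\<in>hom C u v. \<forall>b\<in>hom C u v. lc_add C a b \<in> hom C u v"
    using L by (elim conjE) assumption
  moreover have "\<forall>u v. \<forall>a\<in>hom C u v. \<forall>p\<in>center. lc_scal C a p \<in> hom C u v"
    using L by (elim conjE) assumption
  moreover have "\<forall>u. lc_ostar C (lc_ostar C u) = u \<and> lc_ostar C u \<noteq> u"
    using L by (elim conjE) assumption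
  moreover have "\<forall>a. lc_mstar C a \<in> hom C (lc_ostar C (lc_cod C a)) (lc_ostar C (lc_dom C a)) \<and>
      lc_mstar C (lc_mstar C a) = a"
    using L by (elim conjE) assumption
  ultimately show "lc_dom C (lc_mstar C a) = lc_ostar C (lc_cod C a)"
    "lc_cod C (lc_mstar C a) = lc_ostar C (lc_dom C a)" "lc_ostar C (lc_ostar C u) = u"
    "lc_dom C (lc_id C u) = u" "lc_cod C (lc_id C u) = u"
    "lc_dom C b = lc_cod C a \<Longrightarrow> lc_dom C (lc_comp C b a) = lc_dom C a"
    "lc_dom C b = lc_cod C a \<Longrightarrow> lc_cod C (lc_comp C b a) = lc_cod C b"
    "x \<in> hom C u v \<Longrightarrow> y \<in> hom C u v \<Longrightarrow> p \<in> center \<Longrightarrow> q \<in> center \<Longrightarrow>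
      lc_add C (lc_scal C x p) (lc_scal C y q) \<in> hom C u v"
    unfolding hom_def by blast+
qed

lemma ostar_in_partition:
  assumes "obj_partition C S0" "lin_cat_inv C bar"
  shows "lc_ostar C u \<in> S0 \<longleftrightarrow> u \<notin> S0"
proof
  assume "lc_ostar C u \<in> S0"
  then show "u \<notin> S0" using assms(1) unfolding obj_partition_def by blast
next
  assume "u \<notin> S0"
  then obtain w where "w \<in> S0" "u = lc_ostar C w" using assms(1) unfolding obj_partition_def by blast
  then show "lc_ostar C u \<in> S0" using ostar_ostar[OF assms(2)] by simp
qed

lemma
  assumes "is_rep C A"
  shows rep_mat_carrier: "snd A a \<in> carrier_mat (fst A (lc_cod C a)) (fst A (lc_dom C a))"
    and rep_id: "snd A (lc_id C u) = 1\<^sub>m (fst A u)"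
    and rep_comp: "lc_dom C b = lc_cod C a \<Longrightarrow> snd A (lc_comp C b a) = snd A b * snd A a"
    and rep_lin_comb: "x \<in> hom C u v \<Longrightarrow> y \<in> hom C u v \<Longrightarrow> p \<in> center \<Longrightarrow> q \<in> center \<Longrightarrow>
      snd A (lc_add C (lc_scal C x p) (lc_scal C y q)) = mat_rscal (snd A x) p + mat_rscal (snd A y) q"
  using assms unfolding is_rep_def by blast+

lemma
  assumes "selfadjoint C bar A"
  shows selfadjoint_is_rep: "is_rep C A"
    and selfadjoint_dim: "fst A (lc_ostar C u) = fst A u"
    and selfadjoint_mat: "adjm bar (snd A (lc_mstar C a)) = snd A a"
proof -
  have A: "A = dual_rep C bar A" and "is_rep C A" using assms unfolding selfadjoint_def by auto
  then show "is_rep C A" by simp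
  show "fst A (lc_ostar C u) = fst A u" "adjm bar (snd A (lc_mstar C a)) = snd A a"
    by (subst (2) A, simp add: dual_rep_def)+
qed

lemma rep_iso_iff:
  "rep_iso C A B F \<longleftrightarrow> (\<forall>u. iso_mat (fst B u) (fst A u) (F u)) \<and>
    (\<forall>a. F (lc_cod C a) * snd A a = snd B a * F (lc_dom C a))"
  unfolding rep_iso_def rep_hom_def iso_mat_def by blast

lemma rep_iso_iso_mat: "rep_iso C A B F \<Longrightarrow> iso_mat (fst B u) (fst A u) (F u)"
  unfolding rep_iso_iff by blast

lemma rep_iso_comp:
  assumes A: "is_rep C A" and B: "is_rep C B" and D: "is_rep C D"
    and F: "rep_iso C A B F" and G: "rep_iso C B D G"
  shows "rep_iso C A D (\<lambda>u. G u * F u)"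
  unfolding rep_iso_iff
proof (intro conjI allI)
  fix u show "iso_mat (fst D u) (fst A u) (G u * F u)"
    using F G unfolding rep_iso_iff by (blast intro: iso_mat_mult)
next
  fix a
  let ?u = "lc_dom C a" and ?v = "lc_cod C a"
  have "\<And>u. iso_mat (fst B u) (fst A u) (F u)" "\<And>u. iso_mat (fst D u) (fst B u) (G u)"
    and Fn: "F ?v * snd A a = snd B a * F ?u" and Gn: "G ?v * snd B a = snd D a * G ?u"
    using F G unfolding rep_iso_iff by blast+
  note d = iso_mat_dims[OF this(1)] iso_mat_dims[OF this(2)]
    carrier_matD[OF rep_mat_carrier[OF A]] carrier_matD[OF rep_mat_carrier[OF B]]
    carrier_matD[OF rep_mat_carrier[OF D]]
  have "G ?v * F ?v * snd A a = G ?v * snd B a * F ?u" using Fn d by (simp add: mult_assoc_dim)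
  also have "\<dots> = snd D a * (G ?u * F ?u)" using Gn d by (simp add: mult_assoc_dim)
  finally show "G ?v * F ?v * snd A a = snd D a * (G ?u * F ?u)" .
qed

lemma rep_iso_inv:
  assumes A: "is_rep C A" and B: "is_rep C B" and F: "rep_iso C A B F"
  shows "rep_iso C B A (\<lambda>u. minv (F u))"
  using F unfolding rep_iso_iff
  by (auto intro: iso_mat_minv minv_commute rep_mat_carrier[OF A] rep_mat_carrier[OF B])

lemma rep_iso_dual:
  fixes C :: "('o, 'm, 'k::division_ring) lincat"
  assumes bar: "skew_involution bar" and C: "lin_cat_inv C bar"
    and A: "selfadjoint C bar A" and B: "selfadjoint C bar B" and F: "rep_iso C A B F"
  shows "rep_iso C B A (dual_map C bar F)"
  unfolding rep_iso_iff
proof (intro conjI allI)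
  have Fi: "\<And>u. iso_mat (fst B u) (fst A u) (F u)" using F unfolding rep_iso_iff by blast
  fix u show "iso_mat (fst A u) (fst B u) (dual_map C bar F u)"
    using iso_mat_adjm[OF bar Fi[of "lc_ostar C u"]]
    unfolding dual_map_def selfadjoint_dim[OF A] selfadjoint_dim[OF B] .
next
  fix a
  let ?u = "lc_dom C a" and ?v = "lc_cod C a" and ?b = "lc_mstar C a"
  have Fi: "\<And>u. iso_mat (fst B u) (fst A u) (F u)"
    and Fb: "F (lc_cod C ?b) * snd A ?b = snd B ?b * F (lc_dom C ?b)"
    using F unfolding rep_iso_iff by blast+
  from Fb have natural: "F (lc_ostar C ?u) * snd A ?b = snd B ?b * F (lc_ostar C ?v)"
    unfolding dom_mstar[OF C] cod_mstar[OF C] .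
  note d = iso_mat_dims[OF Fi] carrier_matD[OF rep_mat_carrier[OF selfadjoint_is_rep[OF A]]]
    carrier_matD[OF rep_mat_carrier[OF selfadjoint_is_rep[OF B]]]
  have "dual_map C bar F ?v * snd B a = adjm bar (F (lc_ostar C ?v)) * adjm bar (snd B ?b)"
    unfolding dual_map_def selfadjoint_mat[OF B] ..
  also have "\<dots> = adjm bar (snd B ?b * F (lc_ostar C ?v))"
    using d by (simp add: adjm_mult[OF bar] dom_mstar[OF C])
  also have "\<dots> = adjm bar (F (lc_ostar C ?u) * snd A ?b)" by (simp add: natural)
  also have "\<dots> = snd A a * dual_map C bar F ?u"
    using d by (simp add: adjm_mult[OF bar] cod_mstar[OF C] dual_map_def selfadjoint_mat[OF A])
  finally show "dual_map C bar F ?v * snd B a = snd A a * dual_map C bar F ?u" .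
qed

lemma dual_map_dual_map:
  "skew_involution bar \<Longrightarrow> lin_cat_inv C bar \<Longrightarrow> dual_map C bar (dual_map C bar F) = F"
  by (simp add: dual_map_def adjm_adjm ostar_ostar)

lemma dual_map_mult:
  fixes F G :: "'o \<Rightarrow> 'k::division_ring mat"
  assumes "skew_involution bar" "dim_col (G (lc_ostar C u)) = dim_row (F (lc_ostar C u))"
  shows "dual_map C bar (\<lambda>v. G v * F v) u = dual_map C bar F u * dual_map C bar G u"
  using assms by (simp add: dual_map_def adjm_mult)

lemma dual_map_minv:
  fixes F :: "'o \<Rightarrow> 'k::division_ring mat"
  assumes "skew_involution bar" "iso_mat n m (F (lc_ostar C u))"
  shows "dual_map C bar (\<lambda>v. minv (F v)) u = minv (dual_map C bar F u)"
  using assms by (simp add: dual_map_def minv_adjm)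

section \<open>Conjugated representations and the twist\<close>

definition conj_rep :: "('o, 'm, 'k::ring_1) lincat \<Rightarrow> ('o, 'm, 'k) rep \<Rightarrow> ('o \<Rightarrow> 'k mat)
    \<Rightarrow> ('o, 'm, 'k) rep" where
  "conj_rep C A F = (fst A, \<lambda>a. minv (F (lc_cod C a)) * snd A a * F (lc_dom C a))"

lemma twist_conj_rep: "twist C S0 A f = conj_rep C A (ftilde S0 A f)"
  unfolding twist_def conj_rep_def ..

lemma fst_twist [simp]: "fst (twist C S0 A f) = fst A"
  unfolding twist_def by simp

lemma is_rep_conj_rep:
  fixes C :: "('o, 'm, 'k::division_ring) lincat"
  assumes C: "lin_cat_inv C bar" and A: "is_rep C A"
    and F: "\<And>u. iso_mat (fst A u) (fst A u) (F u)"
  shows "is_rep C (conj_rep C A F)"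
  unfolding is_rep_def conj_rep_def fst_conv snd_conv
proof (intro conjI allI impI ballI)
  note d = iso_mat_dims[OF F] carrier_matD[OF rep_mat_carrier[OF A]]
  show "finite {u. fst A u \<noteq> 0}" using A unfolding is_rep_def by blast
  fix a show "minv (F (lc_cod C a)) * snd A a * F (lc_dom C a)
    \<in> carrier_mat (fst A (lc_cod C a)) (fst A (lc_dom C a))"
    using d by auto
next
  fix u
  show "minv (F (lc_cod C (lc_id C u))) * snd A (lc_id C u) * F (lc_dom C (lc_id C u)) = 1\<^sub>m (fst A u)"
    using minv_mult_self[OF F] iso_mat_dims[OF F]
    by (simp add: dom_id[OF C] cod_id[OF C] rep_id[OF A])
next
  fix a b assume ba: "lc_dom C b = lc_cod C a"
  note d = iso_mat_dims[OF F] carrier_matD[OF rep_mat_carrier[OF A]]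
  show "minv (F (lc_cod C (lc_comp C b a))) * snd A (lc_comp C b a) * F (lc_dom C (lc_comp C b a)) =
    minv (F (lc_cod C b)) * snd A b * F (lc_dom C b) * (minv (F (lc_cod C a)) * snd A a * F (lc_dom C a))"
    using d ba mult_minv_self[OF F]
    by (simp add: dom_comp[OF C ba] cod_comp[OF C ba] rep_comp[OF A ba] mult_dim_simps)
next
  fix u v x y and p q :: 'k
  assume xy: "x \<in> hom C u v" "y \<in> hom C u v" and pq: "p \<in> center" "q \<in> center"
  let ?z = "lc_add C (lc_scal C x p) (lc_scal C y q)"
  have dc: "lc_dom C x = u" "lc_cod C x = v" "lc_dom C y = u" "lc_cod C y = v"
    "lc_dom C ?z = u" "lc_cod C ?z = v"
    using xy lin_comb_hom[OF C xy pq] unfolding hom_def by simp_all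
  have c: "mat_rscal (snd A x) p \<in> carrier_mat (fst A v) (fst A u)"
    "mat_rscal (snd A y) q \<in> carrier_mat (fst A v) (fst A u)"
    using rep_mat_carrier[OF A, of x] rep_mat_carrier[OF A, of y] dc
    unfolding mat_rscal_def by auto
  note m = minv_carrier[OF F] iso_mat_carrier[OF F]
  have "minv (F v) * (mat_rscal (snd A x) p + mat_rscal (snd A y) q) * F u
      = (minv (F v) * mat_rscal (snd A x) p + minv (F v) * mat_rscal (snd A y) q) * F u"
    using c m by (subst mult_add_distrib_mat) auto
  also have "\<dots> = minv (F v) * mat_rscal (snd A x) p * F u + minv (F v) * mat_rscal (snd A y) q * F u"
    using c m by (intro add_mult_distrib_mat[of _ "fst A v" "fst A u"] mult_carrier_mat) auto
  also have "\<dots> = mat_rscal (minv (F v) * snd A x * F u) p + mat_rscal (minv (F v) * snd A y * F u) q"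
    using pq iso_mat_dims[OF F] carrier_matD[OF rep_mat_carrier[OF A, of x]] carrier_matD[OF rep_mat_carrier[OF A, of y]] dc
    by (simp add: mult_mat_rscal mat_rscal_mult)
  finally show "minv (F (lc_cod C ?z)) * snd A ?z * F (lc_dom C ?z) =
    mat_rscal (minv (F (lc_cod C x)) * snd A x * F (lc_dom C x)) p +
    mat_rscal (minv (F (lc_cod C y)) * snd A y * F (lc_dom C y)) q"
    unfolding dc rep_lin_comb[OF A xy pq] .
qed

lemma rep_iso_conj_rep:
  assumes A: "is_rep C A" and F: "\<And>u. iso_mat (fst A u) (fst A u) (F u)"
  shows "rep_iso C (conj_rep C A F) A F"
  unfolding rep_iso_iff conj_rep_def fst_conv snd_conv
  using F iso_mat_dims[OF F] carrier_matD[OF rep_mat_carrier[OF A]] mult_minv_self[OF F]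
  by (simp add: mult_dim_simps)

lemma dual_rep_conj_rep:
  fixes C :: "('o, 'm, 'k::division_ring) lincat"
  assumes bar: "skew_involution bar" and C: "lin_cat_inv C bar" and A: "is_rep C A"
    and F: "\<And>u. iso_mat (fst A u) (fst A u) (F u)"
  shows "dual_rep C bar (conj_rep C A F) = conj_rep C (dual_rep C bar A) (\<lambda>u. minv (dual_map C bar F u))"
proof -
  have "adjm bar (minv (F (lc_ostar C (lc_dom C a))) * snd A (lc_mstar C a) * F (lc_ostar C (lc_cod C a)))
    = minv (minv (adjm bar (F (lc_ostar C (lc_cod C a))))) * adjm bar (snd A (lc_mstar C a))
      * minv (adjm bar (F (lc_ostar C (lc_dom C a))))" for a
    using iso_mat_dims[OF F] carrier_matD[OF rep_mat_carrier[OF A, of "lc_mstar C a"]]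
    by (simp add: adjm_mult3[OF bar] minv_adjm[OF bar F] minv_adjm[OF bar iso_mat_minv[OF F]] minv_minv[OF F]
        dom_mstar[OF C] cod_mstar[OF C])
  then show ?thesis
    by (simp add: dual_rep_def conj_rep_def dual_map_def dom_mstar[OF C] cod_mstar[OF C])
qed

lemma conj_rep_eq_conj_rep_minv:
  assumes A: "is_rep C A"
    and F: "\<And>u. iso_mat (fst A u) (fst A u) (F u)" and G: "\<And>u. iso_mat (fst A u) (fst A u) (G u)"
    and FG: "\<And>a. F (lc_cod C a) * G (lc_cod C a) * snd A a = snd A a * (F (lc_dom C a) * G (lc_dom C a))"
  shows "conj_rep C A F = conj_rep C A (\<lambda>u. minv (G u))"
proof -
  have "minv (F (lc_cod C a)) * snd A a * F (lc_dom C a) = G (lc_cod C a) * snd A a * minv (G (lc_dom C a))"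
    for a
  proof -
    note d = iso_mat_dims[OF F] iso_mat_dims[OF G] carrier_matD[OF rep_mat_carrier[OF A, of a]]
    have "F (lc_cod C a) * (G (lc_cod C a) * snd A a) = (snd A a * F (lc_dom C a)) * G (lc_dom C a)"
      using FG[of a] d by (simp add: mult_assoc_dim)
    from minv_commute[OF F G mult_carrier_mat mult_carrier_mat this, OF iso_mat_carrier[OF G]
        rep_mat_carrier[OF A] rep_mat_carrier[OF A] iso_mat_carrier[OF F]]
    show ?thesis using d by (simp add: mult_assoc_dim)
  qed
  then show ?thesis unfolding conj_rep_def using minv_minv[OF G] by simp
qed

lemma ftilde_iso:
  "rep_iso C A A f \<Longrightarrow> iso_mat (fst A u) (fst A u) (ftilde S0 A f u)"
  unfolding ftilde_def rep_iso_iff using iso_mat_one by auto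

lemma ftilde_mult_dual:
  fixes C :: "('o, 'm, 'k::division_ring) lincat"
  assumes bar: "skew_involution bar" and C: "lin_cat_inv C bar" and S0: "obj_partition C S0"
    and A: "selfadjoint C bar A" and f: "rep_iso C A A f" and fd: "dual_map C bar f = f"
  shows "ftilde S0 A f u * dual_map C bar (ftilde S0 A f) u = f u"
proof -
  have fu: "f u \<in> carrier_mat (fst A u) (fst A u)" using f iso_mat_carrier unfolding rep_iso_iff by blast
  show ?thesis
  proof (cases "u \<in> S0")
    case True
    then show ?thesis
      using ostar_in_partition[OF S0 C, of u] fu
      by (simp add: ftilde_def dual_map_def selfadjoint_dim[OF A] adjm_one[OF bar])
  next
    case False
    then have "ftilde S0 A f (lc_ostar C u) = f (lc_ostar C u)"
      using ostar_in_partition[OF S0 C, of u] by (simp add: ftilde_def)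
    then have "dual_map C bar (ftilde S0 A f) u = f u"
      using fd unfolding dual_map_def by metis
    then show ?thesis using False fu by (simp add: ftilde_def)
  qed
qed

lemma twist_selfadjoint:
  fixes C :: "('o, 'm, 'k::division_ring) lincat"
  assumes bar: "skew_involution bar" and C: "lin_cat_inv C bar" and S0: "obj_partition C S0"
    and A: "selfadjoint C bar A" and f: "rep_iso C A A f" and fd: "dual_map C bar f = f"
  shows "selfadjoint C bar (twist C S0 A f)"
proof -
  let ?F = "ftilde S0 A f" and ?G = "dual_map C bar (ftilde S0 A f)"
  have Ar: "is_rep C A" by (rule selfadjoint_is_rep[OF A])
  have F: "\<And>u. iso_mat (fst A u) (fst A u) (?F u)" by (rule ftilde_iso[OF f])
  have G: "iso_mat (fst A u) (fst A u) (?G u)" for u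
    using iso_mat_adjm[OF bar F[of "lc_ostar C u"]] unfolding dual_map_def selfadjoint_dim[OF A] .
  have "dual_rep C bar (conj_rep C A ?F) = conj_rep C (dual_rep C bar A) (\<lambda>u. minv (?G u))"
    by (rule dual_rep_conj_rep[OF bar C Ar F])
  also have "\<dots> = conj_rep C A (\<lambda>u. minv (?G u))"
    using A unfolding selfadjoint_def by simp
  also have "\<dots> = conj_rep C A ?F"
    using f ftilde_mult_dual[OF bar C S0 A f fd]
    by (intro conj_rep_eq_conj_rep_minv[OF Ar F G, symmetric]) (simp add: rep_iso_iff)
  finally show ?thesis
    unfolding selfadjoint_def twist_conj_rep using is_rep_conj_rep[OF C Ar F] by simp
qed

lemma
  fixes C :: "('o, 'm, 'k::division_ring) lincat"
  assumes bar: "skew_involution bar" and C: "lin_cat_inv C bar" and S0: "obj_partition C S0"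
    and A: "selfadjoint C bar A" and f: "rep_iso C A A f" and fd: "dual_map C bar f = f"
  shows rep_iso_ftilde: "rep_iso C (twist C S0 A f) A (ftilde S0 A f)"
    and rep_iso_dual_ftilde: "rep_iso C A (twist C S0 A f) (dual_map C bar (ftilde S0 A f))"
proof -
  show iso: "rep_iso C (twist C S0 A f) A (ftilde S0 A f)"
    unfolding twist_conj_rep by (rule rep_iso_conj_rep[OF selfadjoint_is_rep[OF A] ftilde_iso[OF f]])
  show "rep_iso C A (twist C S0 A f) (dual_map C bar (ftilde S0 A f))"
    by (rule rep_iso_dual[OF bar C twist_selfadjoint[OF assms] A iso])
qed

lemma congruent_twist_imp_iso:
  fixes C :: "('o, 'm, 'k::division_ring) lincat"
  assumes bar: "skew_involution bar" and C: "lin_cat_inv C bar" and S0: "obj_partition C S0"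
    and A: "selfadjoint C bar A" and B: "selfadjoint C bar B"
    and f: "rep_iso C A A f" and fd: "dual_map C bar f = f"
    and g: "rep_iso C B B g" and gd: "dual_map C bar g = g"
    and congr: "congruent C bar (twist C S0 A f) (twist C S0 B g)"
  shows "\<exists>h. rep_iso C B A h \<and> (\<forall>u. g u = dual_map C bar h u * f u * h u)"
proof -
  obtain \<phi> where \<phi>: "rep_iso C (twist C S0 A f) (twist C S0 B g) \<phi>"
    and \<phi>_dual: "\<And>u. dual_map C bar \<phi> u = minv (\<phi> u)"
    using congr unfolding congruent_def by blast
  define FA where "FA = ftilde S0 A f"
  define FB where "FB = ftilde S0 B g"
  define GA where "GA = dual_map C bar FA"
  define GB where "GB = dual_map C bar FB"
  define h where "h = (\<lambda>u. minv (GA u) * (minv (\<phi> u) * GB u))"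
  note Ar = selfadjoint_is_rep[OF A] and Br = selfadjoint_is_rep[OF B]
  note Afr = selfadjoint_is_rep[OF twist_selfadjoint[OF bar C S0 A f fd]]
  note Bgr = selfadjoint_is_rep[OF twist_selfadjoint[OF bar C S0 B g gd]]
  have GA_iso: "rep_iso C A (twist C S0 A f) GA" and GB_iso: "rep_iso C B (twist C S0 B g) GB"
    unfolding GA_def FA_def GB_def FB_def
    by (rule rep_iso_dual_ftilde[OF bar C S0 A f fd], rule rep_iso_dual_ftilde[OF bar C S0 B g gd])
  have "rep_iso C B A h"
    unfolding h_def
    by (rule rep_iso_comp[OF Br Afr Ar rep_iso_comp[OF Br Bgr Afr GB_iso rep_iso_inv[OF Afr Bgr \<phi>]]
          rep_iso_inv[OF Ar Afr GA_iso]])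
  moreover have "g u = dual_map C bar h u * f u * h u" for u
  proof -
    have FA: "iso_mat (fst A v) (fst A v) (FA v)" and FB: "iso_mat (fst B v) (fst B v) (FB v)" for v
      unfolding FA_def FB_def by (rule ftilde_iso[OF f], rule ftilde_iso[OF g])
    note \<phi>v = rep_iso_iso_mat[OF \<phi>, unfolded fst_twist]
      and GA = rep_iso_iso_mat[OF GA_iso, unfolded fst_twist]
      and GB = rep_iso_iso_mat[OF GB_iso, unfolded fst_twist]
    note d = iso_mat_dims[OF FA] iso_mat_dims[OF FB] iso_mat_dims[OF GA] iso_mat_dims[OF GB]
      iso_mat_dims[OF \<phi>v]
    have "dual_map C bar (\<lambda>v. minv (\<phi> v)) u = \<phi> u"
      by (rule trans[OF dual_map_minv[where F = \<phi>, OF bar \<phi>v]]) (simp add: \<phi>_dual minv_minv[OF \<phi>v])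
    moreover have "dual_map C bar (\<lambda>v. minv (GA v)) u = minv (FA u)"
      by (rule trans[OF dual_map_minv[where F = GA, OF bar GA]]) (simp add: GA_def dual_map_dual_map[OF bar C])
    moreover have "dual_map C bar h u
        = dual_map C bar GB u * dual_map C bar (\<lambda>v. minv (\<phi> v)) u * dual_map C bar (\<lambda>v. minv (GA v)) u"
      unfolding h_def using d by (simp add: dual_map_mult[OF bar])
    ultimately have "dual_map C bar h u = FB u * \<phi> u * minv (FA u)"
      unfolding GB_def by (simp add: dual_map_dual_map[OF bar C])
    moreover have "f u = FA u * GA u" and "g u = FB u * GB u"
      unfolding FA_def FB_def GA_def GB_def
      by (simp_all add: ftilde_mult_dual[OF bar C S0 A f fd] ftilde_mult_dual[OF bar C S0 B g gd])
    ultimately show ?thesis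
      unfolding h_def using d minv_mult_self[OF FA] minv_mult_self[OF GA] minv_mult_self[OF \<phi>v]
        mult_minv_self[OF GA] mult_minv_self[OF \<phi>v]
      by (simp add: mult_dim_simps)
  qed
  ultimately show ?thesis by blast
qed

lemma iso_imp_congruent_twist:
  fixes C :: "('o, 'm, 'k::division_ring) lincat"
  assumes bar: "skew_involution bar" and C: "lin_cat_inv C bar" and S0: "obj_partition C S0"
    and A: "selfadjoint C bar A" and B: "selfadjoint C bar B"
    and f: "rep_iso C A A f" and fd: "dual_map C bar f = f"
    and g: "rep_iso C B B g" and gd: "dual_map C bar g = g"
    and h: "rep_iso C B A h" and gh: "\<And>u. g u = dual_map C bar h u * f u * h u"
  shows "congruent C bar (twist C S0 A f) (twist C S0 B g)"
proof -
  define FA where "FA = ftilde S0 A f"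
  define FB where "FB = ftilde S0 B g"
  define H where "H = dual_map C bar h"
  define \<phi> where "\<phi> = (\<lambda>u. minv (FB u) * (H u * FA u))"
  note Ar = selfadjoint_is_rep[OF A] and Br = selfadjoint_is_rep[OF B]
  note Af = twist_selfadjoint[OF bar C S0 A f fd] and Bg = twist_selfadjoint[OF bar C S0 B g gd]
  have FA_iso: "rep_iso C (twist C S0 A f) A FA" and FB_iso: "rep_iso C (twist C S0 B g) B FB"
    unfolding FA_def FB_def
    by (rule rep_iso_ftilde[OF bar C S0 A f fd], rule rep_iso_ftilde[OF bar C S0 B g gd])
  have H_iso: "rep_iso C A B H" unfolding H_def by (rule rep_iso_dual[OF bar C B A h])
  have "rep_iso C (twist C S0 A f) (twist C S0 B g) \<phi>"
    unfolding \<phi>_def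
    by (rule rep_iso_comp[OF selfadjoint_is_rep[OF Af] Br selfadjoint_is_rep[OF Bg]
          rep_iso_comp[OF selfadjoint_is_rep[OF Af] Ar Br FA_iso H_iso]
          rep_iso_inv[OF selfadjoint_is_rep[OF Bg] Br FB_iso]])
  moreover have "dual_map C bar \<phi> u = minv (\<phi> u)" for u
  proof -
    let ?GA = "dual_map C bar FA" and ?GB = "dual_map C bar FB"
    have FA: "iso_mat (fst A v) (fst A v) (FA v)" and FB: "iso_mat (fst B v) (fst B v) (FB v)" for v
      unfolding FA_def FB_def by (rule ftilde_iso[OF f], rule ftilde_iso[OF g])
    note GB = rep_iso_iso_mat[OF rep_iso_dual[OF bar C Bg B FB_iso], unfolded fst_twist]
      and Hv = rep_iso_iso_mat[OF H_iso] and hv = rep_iso_iso_mat[OF h]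
    note d = iso_mat_dims[OF FA] iso_mat_dims[OF FB] iso_mat_dims[OF GB] iso_mat_dims[OF Hv]
      iso_mat_dims[OF hv] iso_mat_dims[OF rep_iso_iso_mat[OF rep_iso_dual[OF bar C Af A FA_iso]]]
    have "f u = FA u * ?GA u" and "g u = FB u * ?GB u"
      unfolding FA_def FB_def
      by (simp_all add: ftilde_mult_dual[OF bar C S0 A f fd] ftilde_mult_dual[OF bar C S0 B g gd])
    then have gHf: "FB u * ?GB u = H u * (FA u * ?GA u) * h u"
      using gh unfolding H_def by simp
    have "dual_map C bar \<phi> u = ?GA u * dual_map C bar H u * dual_map C bar (\<lambda>v. minv (FB v)) u"
      unfolding \<phi>_def using d by (simp add: dual_map_mult[OF bar] mult_assoc_dim)
    also have "\<dots> = ?GA u * h u * minv (?GB u)"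
      unfolding H_def dual_map_dual_map[OF bar C]
      by (subst dual_map_minv[where F = FB, OF bar FB]) (rule refl)
    also have "\<dots> = minv (FA u) * minv (H u) * (FB u * ?GB u) * minv (?GB u)"
      unfolding gHf using d minv_mult_self[OF FA] minv_mult_self[OF Hv]
      by (simp add: mult_dim_simps)
    also have "\<dots> = minv (\<phi> u)"
      unfolding \<phi>_def using d mult_minv_self[OF GB] minv_minv[OF FB]
        minv_mult[OF iso_mat_minv[OF FB] iso_mat_mult[OF Hv FA]] minv_mult[OF Hv FA]
      by (simp add: mult_dim_simps)
    finally show ?thesis .
  qed
  ultimately show ?thesis unfolding congruent_def using Af Bg by blast
qed

theorem lemma3:
  fixes C :: "('o, 'm, 'k::division_ring) lincat"
    and bar :: "'k \<Rightarrow> 'k"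
    and S0 :: "'o set"
    and A B :: "('o, 'm, 'k) rep"
    and f g :: "'o \<Rightarrow> 'k mat"
  assumes "skew_involution bar"
    and "lin_cat_inv C bar"
    and "obj_partition C S0"
    and "selfadjoint C bar A"
    and "selfadjoint C bar B"
    and "rep_iso C A A f" and "dual_map C bar f = f"
    and "rep_iso C B B g" and "dual_map C bar g = g"
  shows "congruent C bar (twist C S0 A f) (twist C S0 B g) \<longleftrightarrow>
    (\<exists>h. rep_iso C B A h \<and> (\<forall>u. g u = dual_map C bar h u * f u * h u))"
  using congruent_twist_imp_iso[OF assms] iso_imp_congruent_twist[OF assms] by blast

end
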